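(* Let $(S,\mathcal B_S,\mu)$ be a standard Lebesgue space with $\sigma$-finite measure $\mu$, and $f,g:S\to[0,\infty)$ measurable with $\int_S f\,d\mu=\int_S g\,d\mu=1$. Let $(X,Y)$ satisfy \[ \mathbb P(X\le x,Y\le y)=\exp\Big\{-\int_S \max\Big(\frac{f(s)}{x},\frac{g(s)}{y}\Big)\mu(ds)\Big\},\qquad x,y>0, \] and let $(X_i,Y_i)$, $i\ge1$, be i.i.d. copies. Let $\gamma(t)=\frac1t\int_S f\mathbf 1_{\{f>tg\}}d\mu$, suppose $\mu(\{f>tg\})>0$ for all $t\in(0,\infty)$ and $\gamma\in RV_{-\alpha}$ for some $\alpha$ (equivalently $X/Y\in RV_{-\alpha}$). Let $\kappa_t\sim(1/\gamma)^{\leftarrow}(t)$. Then \[ t\,\mathbb P\Big[\Big(\frac{X/Y}{\kappa_t},\frac Yt\Big)\in\cdot\Big]\xrightarrow{v}\nu(\cdot) \] in $M_+(\mathbb E)$, $\mathbb E=[0,\infty]^2\setminus\{(0,0)\}$, with $\nu$ concentrated on the two axes. In other words, \[ \Big(\frac1{\kappa_n}\max_{1\le i\le n}\frac{X_i}{Y_i},\;\frac1n\max_{1\le i\le n}Y_i\Big)\Rightarrow(\zeta^{(1)}_\alpha,\zeta^{(2)}_1), \] where $\zeta^{(1)}_\alpha$ and $\zeta^{(2)}_1$ are independent standard Fréchet random variables with indices $\alpha$ and $1$.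
   Context: $RV_{-\rho}$: $U(tx)/U(t)\to x^{-\rho}$ for all $x>0$. $U^{\leftarrow}(y)=\inf\{s:U(s)\ge y\}$. $M_+(\mathbb E)$ is the space of nonnegative Radon measures on $\mathbb E$ and $\xrightarrow{v}$ denotes vague convergence. Standard $\alpha$-Fréchet: $\mathbb P(\zeta_\alpha\le t)=\exp(-t^{-\alpha})$. Convention $1/0=\infty$. *)

theory Defs
  imports "HOL-Probability.Probability" "HOL-Library.Landau_Symbols"
begin

definition regvar_neg :: "real \<Rightarrow> (real \<Rightarrow> real) \<Rightarrow> bool" where
  "regvar_neg rho U \<longleftrightarrow>
     (\<forall>x>0. ((\<lambda>t. U (t * x) / U t) \<longlongrightarrow> x powr (- rho)) at_top)"

definition left_inv :: "(real \<Rightarrow> real) \<Rightarrow> real \<Rightarrow> real" where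
  "left_inv U y = Inf {s. 0 < s \<and> U s \<ge> y}"

definition gamma_fn :: "'a measure \<Rightarrow> ('a \<Rightarrow> real) \<Rightarrow> ('a \<Rightarrow> real) \<Rightarrow> real \<Rightarrow> real" where
  "gamma_fn mu f g t = (1 / t) * (\<integral>s. f s * indicator {s \<in> space mu. f s > t * g s} s \<partial>mu)"

end

theory Submission
  imports Defs
begin

text \<open>By independence the probability in question is the \<open>n\<close>-th power of \<open>P(X / Y \<le> a, Y \<le> b)\<close>
  with \<open>a = \<kappa>\<^sub>n x\<close> and \<open>b = n y\<close>. Differentiating the distribution function \<open>exp (- V(x, y))\<close>,
  \<open>V(x, y) = \<integral> max (f / x) (g / y) d\<mu>\<close>, along the ray \<open>X = a Y\<close> shows that
  \<open>t \<mapsto> P(X \<le> a Y, 0 < Y \<le> t)\<close> has derivative \<open>A exp (- c / t) / t\<^sup>2\<close>, where \<open>c = V(a, 1)\<close>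
  and \<open>A\<close> is the \<open>g\<close>-mass of \<open>{f \<le> a g}\<close> up to ties; hence \<open>P(X / Y \<le> a, Y \<le> b) \<approx> A / c * exp (- c / b)\<close>.
  As \<open>c - A = \<gamma>(a)\<close> and \<open>n \<gamma>(\<kappa>\<^sub>n x) \<rightarrow> x\<^sup>-\<^sup>\<alpha>\<close> by regular variation of \<open>\<gamma>\<close> and the choice of \<open>\<kappa>\<close>,
  the \<open>n\<close>-th power tends to \<open>exp (- x\<^sup>-\<^sup>\<alpha>) exp (- 1 / y)\<close>.\<close>

section \<open>Elementary real analysis\<close>

lemma exp_minus_diff_le:
  fixes u v :: real
  assumes "0 \<le> v" "v \<le> u"
  shows "exp (- v) - exp (- u) \<le> u - v"
proof -
  have "exp (- v) - exp (- u) = exp (- v) * (1 - exp (v - u))"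
    by (simp add: algebra_simps flip: exp_add)
  also have "\<dots> \<le> 1 * (u - v)"
  proof (rule mult_mono)
    show "1 - exp (v - u) \<le> u - v"
      using exp_ge_add_one_self[of "v - u"] by linarith
  qed (use assms in auto)
  finally show ?thesis by simp
qed

lemma exp_minus_add_ge:
  fixes u w :: real
  assumes "0 \<le> u" "0 \<le> w"
  shows "exp (- u) - w \<le> exp (- (u + w))"
  using exp_minus_diff_le[of u "u + w"] assms by simp

lemma exp_minus_div_le:
  fixes c t :: real
  assumes "1 \<le> c" "0 < t"
  shows "exp (- c / t) \<le> t"
proof -
  have "c / t \<le> exp (c / t)" using exp_ge_add_one_self[of "c / t"] by linarith
  then have "1 / exp (c / t) \<le> 1 / (c / t)" using assms by (intro divide_left_mono) auto
  also have "1 / (c / t) \<le> t" using assms by (simp add: field_simps)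
  finally show ?thesis by (simp add: exp_minus inverse_eq_divide)
qed

lemma one_minus_exp_minus_ge:
  fixes w :: real
  assumes "0 \<le> w"
  shows "w / (1 + w) \<le> 1 - exp (- w)"
proof -
  have "1 / exp w \<le> 1 / (1 + w)"
    using exp_ge_add_one_self[of w] assms by (intro divide_left_mono) auto
  moreover have "1 - 1 / (1 + w) = w / (1 + w)" using assms by (simp add: field_simps)
  ultimately show ?thesis by (simp add: exp_minus inverse_eq_divide)
qed

lemma le_if_right_increments_small:
  fixes \<Phi> :: "real \<Rightarrow> real"
  assumes "p \<le> q" and cont: "continuous_on {p..q} \<Phi>"
    and incr: "\<And>t e. t \<in> {p..<q} \<Longrightarrow> 0 < e \<Longrightarrow>
      \<exists>d>0. \<forall>h. 0 < h \<and> h < d \<longrightarrow> \<Phi> (t + h) \<le> \<Phi> t + e * h"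
  shows "\<Phi> q \<le> \<Phi> p"
proof -
  have slope: "\<Phi> q \<le> \<Phi> p + e * (q - p)" if e: "0 < e" for e
  proof -
    \<comment> \<open>The largest point of \<open>[p, q]\<close> up to which \<open>\<Phi>\<close> grows with slope at most \<open>e\<close> is \<open>q\<close>.\<close>
    define S where "S = {p..q} \<inter> (\<lambda>t. \<Phi> t - e * (t - p)) -` {..\<Phi> p}"
    have "closed S" unfolding S_def
      by (intro continuous_closed_preimage continuous_intros cont closed_atLeastAtMost closed_atMost)
    moreover have "p \<in> S" using assms(1) by (auto simp: S_def)
    moreover have bdd: "bdd_above S" by (auto simp: S_def bdd_above_def)
    ultimately have TS: "Sup S \<in> S" using closed_contains_Sup by blast
    have "Sup S = q"
    proof (rule ccontr)
      assume "Sup S \<noteq> q"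
      with TS have T: "p \<le> Sup S" "Sup S < q" by (auto simp: S_def)
      obtain d where d: "0 < d" "\<And>h. 0 < h \<and> h < d \<Longrightarrow> \<Phi> (Sup S + h) \<le> \<Phi> (Sup S) + e * h"
        using incr[of "Sup S" e] T e by auto
      define h where "h = min (d / 2) (q - Sup S)"
      have h: "0 < h" "h < d" "Sup S + h \<le> q" using d T by (auto simp: h_def)
      have "\<Phi> (Sup S + h) \<le> \<Phi> (Sup S) + e * h" using d h by auto
      also have "\<Phi> (Sup S) \<le> \<Phi> p + e * (Sup S - p)" using TS by (auto simp: S_def)
      finally have "Sup S + h \<in> S" using h T by (auto simp: S_def algebra_simps)
      then have "Sup S + h \<le> Sup S" using bdd by (rule cSup_upper)
      then show False using h by simp
    qed
    then show ?thesis using TS by (auto simp: S_def)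
  qed
  show ?thesis
  proof (rule field_le_epsilon)
    fix e :: real assume e: "0 < e"
    have "\<Phi> q \<le> \<Phi> p + (e / (q - p + 1)) * (q - p)" using e assms(1) by (intro slope) auto
    also have "(e / (q - p + 1)) * (q - p) \<le> e" using e assms(1) by (simp add: field_simps)
    finally show "\<Phi> q \<le> \<Phi> p + e" by simp
  qed
qed

lemma nonpos_if_right_increments_small:
  fixes \<Phi> :: "real \<Rightarrow> real" and Q :: "real \<Rightarrow> real \<Rightarrow> real"
  assumes cont: "\<And>p q. 0 < p \<Longrightarrow> continuous_on {p..q} \<Phi>"
    and incr: "\<And>t h. 0 < t \<Longrightarrow> 0 < h \<Longrightarrow> \<Phi> (t + h) - \<Phi> t \<le> Q t h"
    and Q: "\<And>t. 0 < t \<Longrightarrow> ((\<lambda>h. Q t h / h) \<longlongrightarrow> 0) (at_right 0)"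
    and start: "\<And>e. 0 < e \<Longrightarrow> eventually (\<lambda>t. \<Phi> t \<le> e) (at_right 0)"
    and "0 < b"
  shows "\<Phi> b \<le> 0"
proof (rule field_le_epsilon)
  fix e :: real assume "0 < e"
  obtain d where d: "0 < d" "\<And>t. 0 < t \<Longrightarrow> t < d \<Longrightarrow> \<Phi> t \<le> e"
    using start[OF \<open>0 < e\<close>] unfolding eventually_at_right_field by auto
  define t0 where "t0 = min d b / 2"
  have t0: "0 < t0" "t0 < b" "\<Phi> t0 \<le> e" using d \<open>0 < b\<close> by (auto simp: t0_def)
  have "\<Phi> b \<le> \<Phi> t0"
  proof (rule le_if_right_increments_small[where \<Phi> = \<Phi>])
    show "continuous_on {t0..b} \<Phi>" using cont t0 by simp
    fix t e' :: real assume t: "t \<in> {t0..<b}" and e': "0 < e'"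
    then have "eventually (\<lambda>h. Q t h / h < e') (at_right 0)"
      using t0 by (intro order_tendstoD(2)[OF Q]) auto
    then obtain d where "0 < d" "\<And>h. 0 < h \<Longrightarrow> h < d \<Longrightarrow> Q t h / h < e'"
      unfolding eventually_at_right_field by auto
    then show "\<exists>d>0. \<forall>h. 0 < h \<and> h < d \<longrightarrow> \<Phi> (t + h) \<le> \<Phi> t + e' * h"
      using incr[of t] t t0 by (intro exI[of _ d]) (force simp: pos_divide_less_eq)
  qed (use t0 in auto)
  then show "\<Phi> b \<le> 0 + e" using t0 by simp
qed

lemma quotient_tendsto_zero_if_deriv_zero:
  fixes F :: "real \<Rightarrow> real"
  assumes "(F has_real_derivative 0) (at 0)" and "F 0 = 0"
  shows "((\<lambda>h. F h / h) \<longlongrightarrow> 0) (at_right 0)"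
proof -
  have "((\<lambda>h. (F (0 + h) - F 0) / h) \<longlongrightarrow> 0) (at 0)" using assms(1) unfolding DERIV_def .
  then show ?thesis using assms(2) unfolding filterlim_at_split by simp
qed

lemma exp_two_scale_increment:
  fixes u v t :: real
  assumes "0 < t" "u + v \<noteq> 0"
  defines "c \<equiv> u + v"
  shows "((\<lambda>h. (exp (- (u / t + v / (t + h))) - exp (- c / t)
      - v / c * (exp (- c / (t + h)) - exp (- c / t))) / h) \<longlongrightarrow> 0) (at_right 0)"
proof (rule quotient_tendsto_zero_if_deriv_zero)
  have "u / t + v / t = c / t" by (simp add: c_def add_divide_distrib)
  then show "exp (- (u / t + v / (t + 0))) - exp (- c / t) - v / c * (exp (- c / (t + 0)) - exp (- c / t)) = 0"
    by simp
  have "((\<lambda>h. exp (- (u / t + v / (t + h))) - exp (- c / t) - v / c * (exp (- c / (t + h)) - exp (- c / t)))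
      has_real_derivative exp (- (u / t + v / t)) * (v / t\<^sup>2) - v / c * (exp (- c / t) * (c / t\<^sup>2))) (at 0)"
    using assms(1) by (auto intro!: derivative_eq_intros simp: power2_eq_square)
  moreover have "exp (- (u / t + v / t)) * (v / t\<^sup>2) - v / c * (exp (- c / t) * (c / t\<^sup>2)) = 0"
  proof -
    have "c \<noteq> 0" using assms(2) by (simp add: c_def)
    moreover have "exp (- (u / t + v / t)) = exp (- c / t)"
      using \<open>u / t + v / t = c / t\<close> by simp
    ultimately show ?thesis by simp
  qed
  ultimately show "((\<lambda>h. exp (- (u / t + v / (t + h))) - exp (- c / t) - v / c * (exp (- c / (t + h)) - exp (- c / t)))
      has_real_derivative 0) (at 0)" by (simp only:)
qed

lemma increment_times_null_quotient_tendsto: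
  fixes E :: "real \<Rightarrow> real"
  assumes t: "0 < t" and E: "(E \<longlongrightarrow> 0) (at_right 0)"
  shows "((\<lambda>h. (1 / t - 1 / (t + h)) * K * E h / h) \<longlongrightarrow> 0) (at_right 0)"
proof -
  have "((\<lambda>h. K / (t * (t + h)) * E h) \<longlongrightarrow> K / (t * (t + 0)) * 0) (at_right 0)"
    using t by (intro tendsto_intros E) auto
  moreover have "K / (t * (t + h)) * E h = (1 / t - 1 / (t + h)) * K * E h / h" if "0 < h" for h
  proof -
    have "1 / t - 1 / (t + h) = h / (t * (t + h))" using t that by (simp add: field_simps)
    then show ?thesis using that by simp
  qed
  then have "eventually (\<lambda>h. K / (t * (t + h)) * E h = (1 / t - 1 / (t + h)) * K * E h / h) (at_right 0)"
    by (simp add: eventually_at_filter)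
  ultimately show ?thesis by (simp add: Lim_transform_eventually)
qed

lemma tendsto_zero_if_scaled_tendsto:
  fixes w :: "nat \<Rightarrow> real"
  assumes "((\<lambda>n. real n * w n) \<longlongrightarrow> z) sequentially"
  shows "(w \<longlongrightarrow> 0) sequentially"
proof -
  have "((\<lambda>n. (real n * w n) * inverse (real n)) \<longlongrightarrow> z * 0) sequentially"
    by (intro tendsto_mult assms tendsto_inverse_0_at_top filterlim_real_sequentially)
  moreover have "eventually (\<lambda>n. (real n * w n) * inverse (real n) = w n) sequentially"
    using eventually_gt_at_top[of 0] by eventually_elim simp
  ultimately show ?thesis by (simp add: Lim_transform_eventually)
qed

lemma tendsto_power_if_scaled_defect_tendsto:
  fixes u :: "nat \<Rightarrow> real"
  assumes lim: "((\<lambda>n. real n * (1 - u n)) \<longlongrightarrow> z) sequentially"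
    and le1: "eventually (\<lambda>n. u n \<le> 1) sequentially"
  shows "((\<lambda>n. u n ^ n) \<longlongrightarrow> exp (- z)) sequentially"
proof -
  define w where "w n = 1 - u n" for n
  have nw: "((\<lambda>n. real n * w n) \<longlongrightarrow> z) sequentially" using lim by (simp add: w_def)
  have w: "(w \<longlongrightarrow> 0) sequentially" by (rule tendsto_zero_if_scaled_tendsto[OF nw])
  have "eventually (\<lambda>n. w n < 1/2) sequentially" using order_tendstoD(2)[OF w, of "1/2"] by simp
  with le1 have small: "eventually (\<lambda>n. 0 \<le> w n \<and> w n < 1/2) sequentially"
    by eventually_elim (simp add: w_def)
  have "((\<lambda>n. real n * ln (1 - w n)) \<longlongrightarrow> - z) sequentially"
  proof (rule tendsto_sandwich)
    show "eventually (\<lambda>n. - (real n * w n) - 2 * (real n * w n) * w n \<le> real n * ln (1 - w n)) sequentially"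
      using small
    proof eventually_elim
      case (elim n)
      have "real n * (- w n - 2 * (w n)\<^sup>2) \<le> real n * ln (1 - w n)"
        using ln_one_minus_pos_lower_bound[of "w n"] elim by (intro mult_left_mono) auto
      then show ?case by (simp add: algebra_simps power2_eq_square)
    qed
    show "eventually (\<lambda>n. real n * ln (1 - w n) \<le> - (real n * w n)) sequentially"
      using small
    proof eventually_elim
      case (elim n)
      have "real n * ln (1 - w n) \<le> real n * (- w n)"
        using ln_le_minus_one[of "1 - w n"] elim by (intro mult_left_mono) auto
      then show ?case by simp
    qed
    have "((\<lambda>n. - (real n * w n) - 2 * (real n * w n) * w n) \<longlongrightarrow> - z - 2 * z * 0) sequentially"
      by (intro tendsto_intros nw w)
    then show "((\<lambda>n. - (real n * w n) - 2 * (real n * w n) * w n) \<longlongrightarrow> - z) sequentially" by simp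
  qed (intro tendsto_intros nw)
  then have "((\<lambda>n. exp (real n * ln (1 - w n))) \<longlongrightarrow> exp (- z)) sequentially"
    by (intro tendsto_intros)
  moreover have "eventually (\<lambda>n. exp (real n * ln (1 - w n)) = u n ^ n) sequentially"
    using small by eventually_elim (simp add: w_def exp_of_nat_mult)
  ultimately show ?thesis by (rule Lim_transform_eventually)
qed

lemma tendsto_power_mass_exp:
  fixes A c :: "nat \<Rightarrow> real"
  assumes lim: "((\<lambda>n. real n * (c n - A n)) \<longlongrightarrow> z) sequentially"
    and c: "\<And>n. 1 \<le> c n" and A: "\<And>n. 0 \<le> A n" "\<And>n. A n \<le> 1" and "0 < y"
  shows "((\<lambda>n. (A n / c n * exp (- c n / (real n * y))) ^ n) \<longlongrightarrow> exp (- (z + 1 / y))) sequentially"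
proof (rule tendsto_power_if_scaled_defect_tendsto)
  have cA: "((\<lambda>n. c n - A n) \<longlongrightarrow> 0) sequentially" by (rule tendsto_zero_if_scaled_tendsto[OF lim])
  have c1: "(c \<longlongrightarrow> 1) sequentially"
  proof (rule tendsto_sandwich[where f = "\<lambda>_. 1" and h = "\<lambda>n. 1 + (c n - A n)"])
    show "((\<lambda>n. 1 + (c n - A n)) \<longlongrightarrow> 1) sequentially" using tendsto_add[OF tendsto_const cA] by simp
  qed (use c A in auto)
  define w where "w n = c n / (real n * y)" for n
  have nw: "((\<lambda>n. real n * w n) \<longlongrightarrow> 1 / y) sequentially"
  proof (rule Lim_transform_eventually)
    show "((\<lambda>n. c n / y) \<longlongrightarrow> 1 / y) sequentially"
      using tendsto_divide[OF c1 tendsto_const[of y]] \<open>0 < y\<close> by simp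
    show "eventually (\<lambda>n. c n / y = real n * w n) sequentially"
      using eventually_gt_at_top[of 0] by eventually_elim (use \<open>0 < y\<close> in \<open>simp add: w_def\<close>)
  qed
  have w: "(w \<longlongrightarrow> 0) sequentially" by (rule tendsto_zero_if_scaled_tendsto[OF nw])
  have w0: "0 \<le> w n" for n using c[of n] \<open>0 < y\<close> by (simp add: w_def)
  have exp_defect: "((\<lambda>n. real n * (1 - exp (- w n))) \<longlongrightarrow> 1 / y) sequentially"
  proof (rule tendsto_sandwich[OF _ _ _ nw])
    show "eventually (\<lambda>n. real n * w n / (1 + w n) \<le> real n * (1 - exp (- w n))) sequentially"
      using one_minus_exp_minus_ge[OF w0] by (intro always_eventually allI)
        (metis mult_left_mono of_nat_0_le_iff times_divide_eq_right)
    show "eventually (\<lambda>n. real n * (1 - exp (- w n)) \<le> real n * w n) sequentially"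
    proof (intro always_eventually allI mult_left_mono)
      show "1 - exp (- w n) \<le> w n" for n using exp_ge_add_one_self[of "- w n"] by simp
    qed simp
    have "((\<lambda>n. real n * w n / (1 + w n)) \<longlongrightarrow> 1 / y / (1 + 0)) sequentially"
      by (intro tendsto_intros nw w) auto
    then show "((\<lambda>n. real n * w n / (1 + w n)) \<longlongrightarrow> 1 / y) sequentially" by simp
  qed
  have "((\<lambda>n. real n * (1 - exp (- w n)) + real n * (c n - A n) * exp (- w n) / c n)
      \<longlongrightarrow> 1 / y + z * exp (- 0) / 1) sequentially"
    using \<open>0 < y\<close> by (intro tendsto_intros exp_defect lim w c1) auto
  moreover have "real n * (1 - exp (- w n)) + real n * (c n - A n) * exp (- w n) / c n
      = real n * (1 - A n / c n * exp (- c n / (real n * y)))" for n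
    using c[of n] by (simp add: w_def field_simps)
  ultimately show "((\<lambda>n. real n * (1 - A n / c n * exp (- c n / (real n * y)))) \<longlongrightarrow> z + 1 / y) sequentially"
    by (simp add: add.commute)
  show "eventually (\<lambda>n. A n / c n * exp (- c n / (real n * y)) \<le> 1) sequentially"
  proof (intro always_eventually allI mult_le_one)
    fix n
    show "A n / c n \<le> 1" using c[of n] A(2)[of n] by (simp add: divide_le_eq)
    show "exp (- c n / (real n * y)) \<le> 1" using c[of n] \<open>0 < y\<close> by simp
  qed (use c A in simp)
qed

lemma integral_indicator_tendsto_zero_at_right:
  fixes w :: "'a \<Rightarrow> real" and P :: "real \<Rightarrow> 'a \<Rightarrow> bool"
  assumes w: "integrable M w" and P: "\<And>h. {s \<in> space M. P h s} \<in> sets M"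
    and vanish: "\<And>s. s \<in> space M \<Longrightarrow> eventually (\<lambda>h. \<not> P h s) (at_right 0)"
  shows "((\<lambda>h. \<integral>s. w s * indicator {s \<in> space M. P h s} s \<partial>M) \<longlongrightarrow> 0) (at_right 0)"
  unfolding filterlim_at_right_to_top
proof (rule integral_dominated_convergence_at_top[where w = "\<lambda>s. \<bar>w s\<bar>" and f = "\<lambda>_. 0", simplified])
  show "(\<lambda>s. w s * indicator {s \<in> space M. P (inverse t) s} s) \<in> borel_measurable M" for t
    using P w by (intro borel_measurable_times borel_measurable_indicator) auto
  show "integrable M (\<lambda>s. \<bar>w s\<bar>)" using w by simp
  show "AE s in M. ((\<lambda>t. w s * indicator {s \<in> space M. P (inverse t) s} s) \<longlongrightarrow> 0) at_top"
  proof (rule AE_I2, rule tendsto_eventually)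
    fix s assume "s \<in> space M"
    then have "eventually (\<lambda>t. \<not> P (inverse t) s) at_top"
      using vanish unfolding eventually_at_right_to_top by blast
    then show "eventually (\<lambda>t. w s * indicator {s \<in> space M. P (inverse t) s} s = 0) at_top"
      by (rule eventually_mono) (simp add: indicator_def)
  qed
qed (auto simp: indicator_def)

section \<open>Inverses of decreasing tails\<close>

locale decreasing_tail =
  fixes \<gamma> :: "real \<Rightarrow> real"
  assumes pos: "\<And>t. 0 < t \<Longrightarrow> 0 < \<gamma> t"
    and antimono: "\<And>s t. 0 < s \<Longrightarrow> s \<le> t \<Longrightarrow> \<gamma> t \<le> \<gamma> s"
    and le_inverse: "\<And>t. 0 < t \<Longrightarrow> \<gamma> t \<le> 1 / t"
begin

definition superlevel :: "real \<Rightarrow> real set" where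
  "superlevel y = {s. 0 < s \<and> y \<le> 1 / \<gamma> s}"

lemma left_inv_eq_Inf_superlevel: "left_inv (\<lambda>s. 1 / \<gamma> s) y = Inf (superlevel y)"
  unfolding left_inv_def superlevel_def by simp

lemma superlevel_nonempty: "superlevel y \<noteq> {}"
proof -
  have "max 1 y \<le> 1 / \<gamma> (max 1 y)"
    using le_inverse[of "max 1 y"] pos[of "max 1 y"] by (simp add: le_divide_eq mult.commute)
  then have "max 1 y \<in> superlevel y" unfolding superlevel_def by simp
  then show ?thesis by auto
qed

lemma bdd_below_superlevel: "bdd_below (superlevel y)"
  unfolding superlevel_def bdd_below_def by (auto intro: less_imp_le)

lemma gamma_left_inv_above_le:
  assumes "0 < y" "0 < e" "0 < left_inv (\<lambda>s. 1 / \<gamma> s) y"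
  shows "\<gamma> (left_inv (\<lambda>s. 1 / \<gamma> s) y * (1 + e)) \<le> 1 / y"
proof -
  let ?L = "Inf (superlevel y)"
  have "?L < ?L * (1 + e)" using assms by (simp add: left_inv_eq_Inf_superlevel)
  then obtain s where s: "0 < s" "y \<le> 1 / \<gamma> s" "s < ?L * (1 + e)"
    using cInf_lessD[OF superlevel_nonempty] by (auto simp: superlevel_def)
  then have "\<gamma> (?L * (1 + e)) \<le> \<gamma> s" by (intro antimono) auto
  also have "\<gamma> s \<le> 1 / y" using s pos[of s] \<open>0 < y\<close> by (simp add: field_simps)
  finally show ?thesis by (simp add: left_inv_eq_Inf_superlevel)
qed

lemma gamma_left_inv_below_gt:
  assumes "0 < y" "0 < e" "e < 1" "0 < left_inv (\<lambda>s. 1 / \<gamma> s) y"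
  shows "1 / y < \<gamma> (left_inv (\<lambda>s. 1 / \<gamma> s) y * (1 - e))"
proof (rule ccontr)
  let ?L = "Inf (superlevel y)"
  assume "\<not> ?thesis"
  moreover have t: "0 < ?L * (1 - e)" using assms by (simp add: left_inv_eq_Inf_superlevel)
  ultimately have "?L * (1 - e) \<in> superlevel y"
    using pos[OF t] \<open>0 < y\<close> by (simp add: superlevel_def left_inv_eq_Inf_superlevel field_simps)
  then have "?L \<le> ?L * (1 - e)" using bdd_below_superlevel by (rule cInf_lower)
  moreover have "0 < e * ?L" using assms by (simp add: left_inv_eq_Inf_superlevel)
  ultimately show False by (simp add: algebra_simps)
qed

lemma left_inv_ge:
  assumes "0 < S" "1 / \<gamma> S < y"
  shows "S \<le> left_inv (\<lambda>s. 1 / \<gamma> s) y"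
  unfolding left_inv_eq_Inf_superlevel
proof (rule cInf_greatest[OF superlevel_nonempty])
  fix s assume s: "s \<in> superlevel y"
  show "S \<le> s"
  proof (rule ccontr)
    assume "\<not> S \<le> s"
    with s have "\<gamma> S \<le> \<gamma> s" by (intro antimono) (auto simp: superlevel_def)
    then have "1 / \<gamma> s \<le> 1 / \<gamma> S" using s pos assms(1) by (intro divide_left_mono) (auto simp: superlevel_def)
    then show False using s assms(2) by (simp add: superlevel_def)
  qed
qed

lemma filterlim_left_inv_at_top: "filterlim (left_inv (\<lambda>s. 1 / \<gamma> s)) at_top at_top"
  unfolding filterlim_at_top
proof
  fix Z :: real
  have "eventually (\<lambda>y. 1 / \<gamma> (max Z 1) < y) at_top" by (rule eventually_gt_at_top)
  then show "eventually (\<lambda>y. Z \<le> left_inv (\<lambda>s. 1 / \<gamma> s) y) at_top"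
    by eventually_elim (use left_inv_ge[of "max Z 1"] in fastforce)
qed

lemma kappa_over_left_inv_tendsto:
  fixes \<kappa> :: "real \<Rightarrow> real"
  assumes "\<kappa> \<sim>[at_top] left_inv (\<lambda>s. 1 / \<gamma> s)"
  shows "((\<lambda>t. \<kappa> t / left_inv (\<lambda>s. 1 / \<gamma> s) t) \<longlongrightarrow> 1) at_top"
proof (rule Lim_transform_eventually[OF asymp_equivD[OF assms]])
  show "eventually (\<lambda>t. (if \<kappa> t = 0 \<and> left_inv (\<lambda>s. 1 / \<gamma> s) t = 0 then 1
      else \<kappa> t / left_inv (\<lambda>s. 1 / \<gamma> s) t) = \<kappa> t / left_inv (\<lambda>s. 1 / \<gamma> s) t) at_top"
    using filterlim_at_top_dense[THEN iffD1, OF filterlim_left_inv_at_top, rule_format, of 0]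
    by eventually_elim auto
qed

lemma eventually_kappa_pos:
  fixes \<kappa> :: "real \<Rightarrow> real"
  assumes "\<kappa> \<sim>[at_top] left_inv (\<lambda>s. 1 / \<gamma> s)"
  shows "eventually (\<lambda>t. 0 < \<kappa> t) at_top"
proof -
  have "eventually (\<lambda>t. 0 < \<kappa> t / left_inv (\<lambda>s. 1 / \<gamma> s) t) at_top"
    using order_tendstoD(1)[OF kappa_over_left_inv_tendsto[OF assms], of 0] by simp
  moreover have "eventually (\<lambda>t. 0 < left_inv (\<lambda>s. 1 / \<gamma> s) t) at_top"
    using filterlim_at_top_dense[THEN iffD1, OF filterlim_left_inv_at_top] by simp
  ultimately show ?thesis by eventually_elim (simp add: zero_less_divide_iff)
qed

lemma regvar_ratio_tendsto:
  fixes s :: "'b \<Rightarrow> real"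
  assumes rv: "regvar_neg \<alpha> \<gamma>" and s: "filterlim s at_top F" and "0 < c" "0 < d"
  shows "((\<lambda>t. \<gamma> (s t * c) / \<gamma> (s t * d)) \<longlongrightarrow> c powr (- \<alpha>) / d powr (- \<alpha>)) F"
proof (rule Lim_transform_eventually)
  show "((\<lambda>t. (\<gamma> (s t * c) / \<gamma> (s t)) / (\<gamma> (s t * d) / \<gamma> (s t)))
      \<longlongrightarrow> c powr (- \<alpha>) / d powr (- \<alpha>)) F"
    using assms unfolding regvar_neg_def
    by (intro tendsto_divide filterlim_compose[OF _ s]) auto
  show "eventually (\<lambda>t. (\<gamma> (s t * c) / \<gamma> (s t)) / (\<gamma> (s t * d) / \<gamma> (s t))
      = \<gamma> (s t * c) / \<gamma> (s t * d)) F"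
    using filterlim_at_top_dense[THEN iffD1, OF s, rule_format, of 0]
  proof eventually_elim
    case (elim t)
    then have "\<gamma> (s t) \<noteq> 0" using pos by (metis less_irrefl)
    then show ?case by simp
  qed
qed

lemma kappa_scaled_gamma_bounds:
  fixes \<kappa> :: "real \<Rightarrow> real"
  assumes kappa: "\<kappa> \<sim>[at_top] left_inv (\<lambda>s. 1 / \<gamma> s)" and "0 < x" "0 < e" "e < 1"
  defines "L \<equiv> left_inv (\<lambda>s. 1 / \<gamma> s)"
  shows "eventually (\<lambda>t. \<gamma> (L t * ((1 + e) * x)) / \<gamma> (L t * (1 - e)) \<le> t * \<gamma> (\<kappa> t * x)
    \<and> t * \<gamma> (\<kappa> t * x) \<le> \<gamma> (L t * ((1 - e) * x)) / \<gamma> (L t * (1 + e))) at_top"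
proof -
  have "eventually (\<lambda>t. \<bar>\<kappa> t / L t - 1\<bar> < e) at_top"
    using tendstoD[OF kappa_over_left_inv_tendsto[OF kappa] \<open>0 < e\<close>] by (simp add: dist_real_def L_def)
  moreover have "eventually (\<lambda>t. 0 < L t) at_top"
    using filterlim_at_top_dense[THEN iffD1, OF filterlim_left_inv_at_top] by (simp add: L_def)
  ultimately show ?thesis using eventually_gt_at_top[of 0]
  proof eventually_elim
    case (elim t)
    then have L: "0 < L t" and t: "0 < t" by auto
    have kb: "(1 - e) * L t \<le> \<kappa> t" "\<kappa> t \<le> (1 + e) * L t"
      using elim(1) L by (auto simp: abs_less_iff field_simps)
    have k: "L t * ((1 - e) * x) \<le> \<kappa> t * x" "\<kappa> t * x \<le> L t * ((1 + e) * x)"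
      using mult_right_mono[OF kb(1), of x] mult_right_mono[OF kb(2), of x] \<open>0 < x\<close>
      by (simp_all add: algebra_simps)
    have lo_pos: "0 < L t * ((1 - e) * x)" using L assms by simp
    have g: "\<gamma> (\<kappa> t * x) \<le> \<gamma> (L t * ((1 - e) * x))" "\<gamma> (L t * ((1 + e) * x)) \<le> \<gamma> (\<kappa> t * x)"
      using antimono[OF lo_pos k(1)] antimono[OF _ k(2)] lo_pos k(1) by auto
    have gp: "0 < \<gamma> (L t * (1 + e))" using pos L \<open>0 < e\<close> by simp
    moreover have "\<gamma> (L t * (1 + e)) \<le> 1 / t"
      using gamma_left_inv_above_le[of t e] L t \<open>0 < e\<close> by (simp add: L_def)
    ultimately have up: "t \<le> 1 / \<gamma> (L t * (1 + e))" using t by (simp add: field_simps)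
    have lo: "1 / \<gamma> (L t * (1 - e)) \<le> t"
      using gamma_left_inv_below_gt[of t e] pos[of "L t * (1 - e)"] L t assms(3,4)
      by (simp add: L_def field_simps)
    have "t * \<gamma> (\<kappa> t * x) \<le> 1 / \<gamma> (L t * (1 + e)) * \<gamma> (L t * ((1 - e) * x))"
      using g(1) up pos[of "\<kappa> t * x"] lo_pos k(1) t gp by (intro mult_mono) auto
    moreover have "1 / \<gamma> (L t * (1 - e)) * \<gamma> (L t * ((1 + e) * x)) \<le> t * \<gamma> (\<kappa> t * x)"
      using g(2) lo pos[of "L t * ((1 + e) * x)"] L t assms by (intro mult_mono) auto
    ultimately show ?case by simp
  qed
qed

lemma kappa_scaled_gamma_tendsto:
  fixes \<kappa> :: "real \<Rightarrow> real"
  assumes rv: "regvar_neg \<alpha> \<gamma>" and kappa: "\<kappa> \<sim>[at_top] left_inv (\<lambda>s. 1 / \<gamma> s)" and "0 < x"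
  shows "((\<lambda>t. t * \<gamma> (\<kappa> t * x)) \<longlongrightarrow> x powr (- \<alpha>)) at_top"
proof (rule tendstoI)
  fix r :: real assume "0 < r"
  define up where "up e = ((1 - e) * x) powr (- \<alpha>) / (1 + e) powr (- \<alpha>)" for e
  define lo where "lo e = ((1 + e) * x) powr (- \<alpha>) / (1 - e) powr (- \<alpha>)" for e
  have "(up \<longlongrightarrow> ((1 - 0) * x) powr (- \<alpha>) / (1 + 0) powr (- \<alpha>)) (at_right 0)"
    "(lo \<longlongrightarrow> ((1 + 0) * x) powr (- \<alpha>) / (1 - 0) powr (- \<alpha>)) (at_right 0)"
    unfolding up_def lo_def using \<open>0 < x\<close> by (intro tendsto_intros; simp)+
  then have "eventually (\<lambda>e. up e < x powr (- \<alpha>) + r / 2 \<and> x powr (- \<alpha>) - r / 2 < lo e) (at_right 0)"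
    using \<open>0 < r\<close> by (intro eventually_conj order_tendstoD(2)[of up] order_tendstoD(1)[of lo]) auto
  then obtain d where d: "0 < d"
    "\<And>e. 0 < e \<Longrightarrow> e < d \<Longrightarrow> up e < x powr (- \<alpha>) + r / 2 \<and> x powr (- \<alpha>) - r / 2 < lo e"
    unfolding eventually_at_right_field by auto
  define e where "e = min (d / 2) (1 / 2)"
  have e: "0 < e" "e < 1" "up e < x powr (- \<alpha>) + r / 2" "x powr (- \<alpha>) - r / 2 < lo e"
    using d by (auto simp: e_def)
  let ?L = "left_inv (\<lambda>s. 1 / \<gamma> s)"
  have "((\<lambda>t. \<gamma> (?L t * ((1 - e) * x)) / \<gamma> (?L t * (1 + e))) \<longlongrightarrow> up e) at_top"
    "((\<lambda>t. \<gamma> (?L t * ((1 + e) * x)) / \<gamma> (?L t * (1 - e))) \<longlongrightarrow> lo e) at_top"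
    unfolding up_def lo_def using e \<open>0 < x\<close>
    by (intro regvar_ratio_tendsto[OF rv filterlim_left_inv_at_top]; simp)+
  then have "eventually (\<lambda>t. \<gamma> (?L t * ((1 - e) * x)) / \<gamma> (?L t * (1 + e)) < x powr (- \<alpha>) + r
      \<and> x powr (- \<alpha>) - r < \<gamma> (?L t * ((1 + e) * x)) / \<gamma> (?L t * (1 - e))) at_top"
    using e \<open>0 < r\<close> by (intro eventually_conj order_tendstoD(2) order_tendstoD(1)) auto
  with kappa_scaled_gamma_bounds[OF kappa \<open>0 < x\<close> e(1,2)]
  show "eventually (\<lambda>t. dist (t * \<gamma> (\<kappa> t * x)) (x powr (- \<alpha>)) < r) at_top"
    by eventually_elim (auto simp: dist_real_def abs_less_iff)
qed

end

section \<open>Spectral densities\<close>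

lemma max_div_le_split_left:
  fixes F G a b h :: real
  assumes "0 \<le> F" "0 \<le> G" "0 < a" "0 < b" "0 \<le> h"
  shows "max (F / (a * (b + h))) (G / b)
    \<le> (if F \<le> a * G then G / b else F / (a * (b + h)))
      + (if a * G < F \<and> F * b < a * G * (b + h) then (1 / b - 1 / (b + h)) / a * F else 0)"
proof (cases "F \<le> a * G")
  case True
  have "F / (a * (b + h)) \<le> a * G / (a * (b + h))" using True assms by (intro divide_right_mono) auto
  also have "\<dots> \<le> G / b" using assms by (simp add: divide_left_mono)
  finally show ?thesis using True by simp
next
  case False
  then have "G / b \<le> F / (a * b)" using assms by (simp add: field_simps)
  moreover have "F / (a * (b + h)) + (1 / b - 1 / (b + h)) / a * F = F / (a * b)"
    using assms by (simp add: divide_simps left_diff_distrib) (simp add: algebra_simps)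
  moreover have "F / (a * (b + h)) \<le> F / (a * b)" using assms by (intro divide_left_mono) auto
  moreover have "G / b \<le> F / (a * (b + h))" if "a * G * (b + h) \<le> F * b"
    using that assms by (simp add: divide_simps) (simp add: algebra_simps)
  ultimately show ?thesis using False by auto
qed

lemma max_div_le_split_right:
  fixes F G a b h :: real
  assumes "0 \<le> F" "0 \<le> G" "0 < a" "0 < b" "0 \<le> h"
  shows "max (F / (a * b)) (G / (b + h))
    \<le> (if a * G \<le> F then F / (a * b) else G / (b + h))
      + (if F < a * G \<and> a * G * b < F * (b + h) then (1 / b - 1 / (b + h)) * G else 0)"
proof (cases "a * G \<le> F")
  case True
  have "G / (b + h) \<le> G / b" using assms by (intro divide_left_mono) auto
  moreover have "G / b \<le> F / (a * b)" using True assms by (simp add: field_simps)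
  ultimately show ?thesis using True by simp
next
  case False
  then have "F / (a * b) \<le> G / b" using assms by (simp add: field_simps)
  moreover have "G / (b + h) + (1 / b - 1 / (b + h)) * G = G / b" by (simp add: left_diff_distrib)
  moreover have "G / (b + h) \<le> G / b" using assms by (intro divide_left_mono) auto
  moreover have "F / (a * b) \<le> G / (b + h)" if "F * (b + h) \<le> a * G * b"
    using that assms by (simp add: field_simps)
  ultimately show ?thesis using False by auto
qed

locale spectral_densities =
  fixes mu :: "'a measure" and f g :: "'a \<Rightarrow> real"
  assumes f_meas[measurable]: "f \<in> borel_measurable mu" and g_meas[measurable]: "g \<in> borel_measurable mu"
    and f_nonneg: "\<forall>s\<in>space mu. 0 \<le> f s" and g_nonneg: "\<forall>s\<in>space mu. 0 \<le> g s"
    and f_int: "integrable mu f" and g_int: "integrable mu g"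
    and f_one: "(\<integral>s. f s \<partial>mu) = 1" and g_one: "(\<integral>s. g s \<partial>mu) = 1"
begin

text \<open>\<open>exponent x y\<close> is the exponent function of the bivariate 1-Frechet law,
  \<open>P(X \<le> x, Y \<le> y) = exp (- exponent x y)\<close>.\<close>

definition exponent :: "real \<Rightarrow> real \<Rightarrow> real" where
  "exponent x y = (\<integral>s. max (f s / x) (g s / y) \<partial>mu)"

definition g_mass_le :: "real \<Rightarrow> real" where
  "g_mass_le a = (\<integral>s. g s * indicator {s \<in> space mu. f s \<le> a * g s} s \<partial>mu)"

definition g_mass_lt :: "real \<Rightarrow> real" where
  "g_mass_lt a = (\<integral>s. g s * indicator {s \<in> space mu. f s < a * g s} s \<partial>mu)"

definition gamma_closed :: "real \<Rightarrow> real" where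
  "gamma_closed a = (1 / a) * (\<integral>s. f s * indicator {s \<in> space mu. a * g s \<le> f s} s \<partial>mu)"

definition f_layer :: "real \<Rightarrow> real \<Rightarrow> real \<Rightarrow> real" where
  "f_layer a b h = (\<integral>s. f s * indicator {s \<in> space mu. a * g s < f s \<and> f s * b < a * g s * (b + h)} s \<partial>mu)"

definition g_layer :: "real \<Rightarrow> real \<Rightarrow> real \<Rightarrow> real" where
  "g_layer a b h = (\<integral>s. g s * indicator {s \<in> space mu. f s < a * g s \<and> a * g s * b < f s * (b + h)} s \<partial>mu)"

lemma integrable_f_indicator: "A \<in> sets mu \<Longrightarrow> integrable mu (\<lambda>s. f s * indicator A s)"
  using integrable_real_mult_indicator[OF _ f_int] by simp

lemma integrable_g_indicator: "A \<in> sets mu \<Longrightarrow> integrable mu (\<lambda>s. g s * indicator A s)"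
  using integrable_real_mult_indicator[OF _ g_int] by simp

lemma integrable_max: "integrable mu (\<lambda>s. max (f s / x) (g s / y))"
proof (rule Bochner_Integration.integrable_bound[where f = "\<lambda>s. \<bar>f s / x\<bar> + \<bar>g s / y\<bar>"])
  show "integrable mu (\<lambda>s. \<bar>f s / x\<bar> + \<bar>g s / y\<bar>)"
    using f_int g_int by (intro Bochner_Integration.integrable_add integrable_abs integrable_divide_zero)
  show "AE s in mu. norm (max (f s / x) (g s / y)) \<le> norm (\<bar>f s / x\<bar> + \<bar>g s / y\<bar>)"
    by (auto simp: abs_if)
qed measurable

lemma integral_f_indicator_nonneg: "0 \<le> (\<integral>s. f s * indicator A s \<partial>mu)"
  using f_nonneg by (intro integral_nonneg_AE AE_I2) (auto simp: indicator_def)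

lemma integral_g_indicator_nonneg: "0 \<le> (\<integral>s. g s * indicator A s \<partial>mu)"
  using g_nonneg by (intro integral_nonneg_AE AE_I2) (auto simp: indicator_def)

lemma integral_f_indicator_le_one:
  assumes "A \<in> sets mu"
  shows "(\<integral>s. f s * indicator A s \<partial>mu) \<le> 1"
proof -
  have "(\<integral>s. f s * indicator A s \<partial>mu) \<le> (\<integral>s. f s \<partial>mu)"
    using assms f_nonneg by (intro integral_mono_AE integrable_f_indicator f_int AE_I2) (auto simp: indicator_def)
  then show ?thesis using f_one by simp
qed

lemma integral_g_indicator_le_one:
  assumes "A \<in> sets mu"
  shows "(\<integral>s. g s * indicator A s \<partial>mu) \<le> 1"
proof -
  have "(\<integral>s. g s * indicator A s \<partial>mu) \<le> (\<integral>s. g s \<partial>mu)"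
    using assms g_nonneg by (intro integral_mono_AE integrable_g_indicator g_int AE_I2) (auto simp: indicator_def)
  then show ?thesis using g_one by simp
qed

lemma g_mass_le_bounds: "0 \<le> g_mass_le a" "g_mass_le a \<le> 1"
  unfolding g_mass_le_def
  by (intro integral_g_indicator_nonneg, intro integral_g_indicator_le_one) measurable

lemma g_mass_lt_bounds: "0 \<le> g_mass_lt a" "g_mass_lt a \<le> 1"
  unfolding g_mass_lt_def
  by (intro integral_g_indicator_nonneg, intro integral_g_indicator_le_one) measurable

lemma gamma_nonneg: "0 < a \<Longrightarrow> 0 \<le> gamma_fn mu f g a"
  unfolding gamma_fn_def using integral_f_indicator_nonneg by simp

lemma gamma_le_inverse: "0 < a \<Longrightarrow> gamma_fn mu f g a \<le> 1 / a"
  unfolding gamma_fn_def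
  using integral_f_indicator_le_one[of "{s \<in> space mu. f s > a * g s}"]
  by (simp add: divide_right_mono)

lemma exponent_ge:
  assumes "0 < y"
  shows "1 / y \<le> exponent x y"
proof -
  have "(\<integral>s. g s / y \<partial>mu) \<le> exponent x y" unfolding exponent_def
    by (intro integral_mono_AE integrable_max integrable_divide_zero g_int AE_I2) auto
  then show ?thesis using g_one by simp
qed

lemma exponent_homogeneous:
  assumes "0 < t"
  shows "exponent (a * t) t = exponent a 1 / t"
proof -
  have "exponent (a * t) t = (\<integral>s. max (f s / a) (g s) / t \<partial>mu)" unfolding exponent_def
    using assms by (intro Bochner_Integration.integral_cong) (auto simp: max_def field_simps)
  then show ?thesis unfolding exponent_def by simp
qed

lemma exponent_eq_g_mass_le_add_gamma:
  assumes "0 < a"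
  shows "exponent a 1 = g_mass_le a + gamma_fn mu f g a"
proof -
  have "exponent a 1 = (\<integral>s. g s * indicator {s \<in> space mu. f s \<le> a * g s} s
      + (1 / a) * (f s * indicator {s \<in> space mu. f s > a * g s} s) \<partial>mu)"
    unfolding exponent_def using assms
    by (intro Bochner_Integration.integral_cong) (auto simp: indicator_def field_simps max_def)
  then show ?thesis unfolding g_mass_le_def gamma_fn_def
    by (subst (asm) Bochner_Integration.integral_add)
      (auto intro!: integrable_g_indicator integrable_f_indicator integrable_mult_right)
qed

lemma exponent_eq_g_mass_lt_add_gamma_closed:
  assumes "0 < a"
  shows "exponent a 1 = g_mass_lt a + gamma_closed a"
proof -
  have "exponent a 1 = (\<integral>s. g s * indicator {s \<in> space mu. f s < a * g s} s
      + (1 / a) * (f s * indicator {s \<in> space mu. a * g s \<le> f s} s) \<partial>mu)"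
    unfolding exponent_def using assms
    by (intro Bochner_Integration.integral_cong) (auto simp: indicator_def field_simps max_def)
  then show ?thesis unfolding g_mass_lt_def gamma_closed_def
    by (subst (asm) Bochner_Integration.integral_add)
      (auto intro!: integrable_g_indicator integrable_f_indicator integrable_mult_right)
qed

lemma gamma_le_gamma_closed: "0 < a \<Longrightarrow> gamma_fn mu f g a \<le> gamma_closed a"
  unfolding gamma_closed_def gamma_fn_def using f_nonneg
  by (intro mult_left_mono integral_mono_AE integrable_f_indicator AE_I2) (auto simp: indicator_def)

lemma gamma_closed_nonneg: "0 < a \<Longrightarrow> 0 \<le> gamma_closed a"
  using gamma_le_gamma_closed gamma_nonneg by (meson order_trans)

lemma gamma_closed_le:
  assumes "0 < a" "1 < r"
  shows "gamma_closed a \<le> gamma_fn mu f g (a / r) / r"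
proof -
  have "(\<integral>s. f s * indicator {s \<in> space mu. a * g s \<le> f s} s \<partial>mu)
      \<le> (\<integral>s. f s * indicator {s \<in> space mu. a / r * g s < f s} s \<partial>mu)"
  proof (intro integral_mono_AE integrable_f_indicator AE_I2)
    fix s assume s: "s \<in> space mu"
    have "a / r * g s < f s" if "a * g s \<le> f s" "0 < f s"
    proof (cases "g s = 0")
      case False
      then have "0 < g s" using g_nonneg s by (simp add: less_le)
      then have "a / r * g s < a * g s" using assms by (simp add: field_simps)
      then show ?thesis using that by simp
    qed (use that in simp)
    then show "f s * indicator {s \<in> space mu. a * g s \<le> f s} s \<le> f s * indicator {s \<in> space mu. a / r * g s < f s} s"
      using f_nonneg s by (cases "f s = 0") (auto simp: indicator_def less_le)
  qed measurable
  then show ?thesis unfolding gamma_closed_def gamma_fn_def using assms by (simp add: field_simps)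
qed

lemma exponent_diff_le:
  assumes "0 < b" "b \<le> b'"
  shows "exponent x b - exponent x b' \<le> 1 / b - 1 / b'"
proof -
  have "exponent x b \<le> (\<integral>s. max (f s / x) (g s / b') + g s * (1 / b - 1 / b') \<partial>mu)" unfolding exponent_def
  proof (intro integral_mono_AE integrable_max Bochner_Integration.integrable_add integrable_mult_left g_int AE_I2)
    fix s assume "s \<in> space mu"
    then have "g s / b' \<le> g s / b" using assms g_nonneg by (intro divide_left_mono) auto
    moreover have "g s / b = g s / b' + g s * (1 / b - 1 / b')" by (simp add: field_simps)
    ultimately show "max (f s / x) (g s / b) \<le> max (f s / x) (g s / b') + g s * (1 / b - 1 / b')"
      by (auto simp: max_def)
  qed
  also have "\<dots> = exponent x b' + (1 / b - 1 / b')" unfolding exponent_def using g_one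
    by (subst Bochner_Integration.integral_add) (auto intro!: integrable_max integrable_mult_left g_int)
  finally show ?thesis by simp
qed

text \<open>Splitting \<open>S\<close> by which of \<open>f\<close>, \<open>g\<close> attains the maximum bounds \<open>exponent\<close> at neighbouring
  arguments, up to an error living on the thin layers \<open>f_layer\<close> and \<open>g_layer\<close>.\<close>

lemma exponent_le_f_layer:
  assumes "0 < a" "0 < b" "0 \<le> h"
  shows "exponent (a * (b + h)) b
    \<le> g_mass_le a / b + gamma_fn mu f g a / (b + h) + (1 / b - 1 / (b + h)) / a * f_layer a b h"
proof -
  let ?A = "{s \<in> space mu. f s \<le> a * g s}" and ?B = "{s \<in> space mu. f s > a * g s}"
    and ?C = "{s \<in> space mu. a * g s < f s \<and> f s * b < a * g s * (b + h)}"
  have "exponent (a * (b + h)) b \<le> (\<integral>s. g s * indicator ?A s / b + 1 / (a * (b + h)) * (f s * indicator ?B s)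
      + (1 / b - 1 / (b + h)) / a * (f s * indicator ?C s) \<partial>mu)" unfolding exponent_def
  proof (intro integral_mono_AE integrable_max Bochner_Integration.integrable_add integrable_mult_right
      integrable_divide_zero integrable_f_indicator integrable_g_indicator AE_I2)
    fix s assume "s \<in> space mu"
    then show "max (f s / (a * (b + h))) (g s / b) \<le> g s * indicator ?A s / b
        + 1 / (a * (b + h)) * (f s * indicator ?B s) + (1 / b - 1 / (b + h)) / a * (f s * indicator ?C s)"
      using max_div_le_split_left[of "f s" "g s" a b h] f_nonneg g_nonneg assms
      by (auto simp: indicator_def split: if_splits)
  qed measurable
  also have "\<dots> = g_mass_le a / b + gamma_fn mu f g a / (b + h) + (1 / b - 1 / (b + h)) / a * f_layer a b h"
  proof -
    have "integrable mu (\<lambda>s. g s * indicator ?A s / b)"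
      "integrable mu (\<lambda>s. 1 / (a * (b + h)) * (f s * indicator ?B s))"
      "integrable mu (\<lambda>s. (1 / b - 1 / (b + h)) / a * (f s * indicator ?C s))"
      by (intro integrable_divide_zero integrable_mult_right integrable_f_indicator integrable_g_indicator; measurable)+
    then show ?thesis unfolding g_mass_le_def gamma_fn_def f_layer_def by simp
  qed
  finally show ?thesis .
qed

lemma exponent_le_g_layer:
  assumes "0 < a" "0 < b" "0 \<le> h"
  shows "exponent (a * b) (b + h)
    \<le> gamma_closed a / b + g_mass_lt a / (b + h) + (1 / b - 1 / (b + h)) * g_layer a b h"
proof -
  let ?A = "{s \<in> space mu. f s < a * g s}" and ?B = "{s \<in> space mu. a * g s \<le> f s}"
    and ?C = "{s \<in> space mu. f s < a * g s \<and> a * g s * b < f s * (b + h)}"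
  have "exponent (a * b) (b + h) \<le> (\<integral>s. 1 / (a * b) * (f s * indicator ?B s) + g s * indicator ?A s / (b + h)
      + (1 / b - 1 / (b + h)) * (g s * indicator ?C s) \<partial>mu)" unfolding exponent_def
  proof (intro integral_mono_AE integrable_max Bochner_Integration.integrable_add integrable_mult_right
      integrable_divide_zero integrable_f_indicator integrable_g_indicator AE_I2)
    fix s assume "s \<in> space mu"
    then show "max (f s / (a * b)) (g s / (b + h)) \<le> 1 / (a * b) * (f s * indicator ?B s)
        + g s * indicator ?A s / (b + h) + (1 / b - 1 / (b + h)) * (g s * indicator ?C s)"
      using max_div_le_split_right[of "f s" "g s" a b h] f_nonneg g_nonneg assms
      by (auto simp: indicator_def split: if_splits)
  qed measurable
  also have "\<dots> = gamma_closed a / b + g_mass_lt a / (b + h) + (1 / b - 1 / (b + h)) * g_layer a b h"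
  proof -
    have "integrable mu (\<lambda>s. 1 / (a * b) * (f s * indicator ?B s))"
      "integrable mu (\<lambda>s. g s * indicator ?A s / (b + h))"
      "integrable mu (\<lambda>s. (1 / b - 1 / (b + h)) * (g s * indicator ?C s))"
      by (intro integrable_divide_zero integrable_mult_right integrable_f_indicator integrable_g_indicator; measurable)+
    then show ?thesis unfolding g_mass_lt_def gamma_closed_def g_layer_def by simp
  qed
  finally show ?thesis .
qed

lemma f_layer_tendsto_zero:
  assumes "0 < b"
  shows "(f_layer a b \<longlongrightarrow> 0) (at_right 0)"
  unfolding f_layer_def
proof (rule integral_indicator_tendsto_zero_at_right[OF f_int])
  fix s assume "s \<in> space mu"
  show "eventually (\<lambda>h. \<not> (a * g s < f s \<and> f s * b < a * g s * (b + h))) (at_right 0)"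
  proof (cases "a * g s < f s")
    case True
    then have "eventually (\<lambda>h. a * g s * h < (f s - a * g s) * b) (at_right 0)"
      using \<open>0 < b\<close> by (intro order_tendstoD(2)[where y = 0]) (auto intro!: tendsto_eq_intros)
    then show ?thesis by eventually_elim (auto simp: algebra_simps)
  qed simp
qed measurable

lemma g_layer_tendsto_zero:
  assumes "0 < b"
  shows "(g_layer a b \<longlongrightarrow> 0) (at_right 0)"
  unfolding g_layer_def
proof (rule integral_indicator_tendsto_zero_at_right[OF g_int])
  fix s assume "s \<in> space mu"
  show "eventually (\<lambda>h. \<not> (f s < a * g s \<and> a * g s * b < f s * (b + h))) (at_right 0)"
  proof (cases "f s < a * g s")
    case True
    then have "eventually (\<lambda>h. f s * h < (a * g s - f s) * b) (at_right 0)"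
      using \<open>0 < b\<close> by (intro order_tendstoD(2)[where y = 0]) (auto intro!: tendsto_eq_intros)
    then show ?thesis by eventually_elim (auto simp: algebra_simps)
  qed simp
qed measurable

lemma gamma_pos:
  assumes supp: "emeasure mu {s \<in> space mu. f s > t * g s} > 0" and "0 < t"
  shows "0 < gamma_fn mu f g t"
proof -
  let ?A = "{s \<in> space mu. f s > t * g s}"
  have "(\<integral>s. f s * indicator ?A s \<partial>mu) \<noteq> 0"
  proof
    assume "(\<integral>s. f s * indicator ?A s \<partial>mu) = 0"
    moreover have i: "integrable mu (\<lambda>s. f s * indicator ?A s)" by (intro integrable_f_indicator) measurable
    ultimately have "AE s in mu. f s * indicator ?A s = 0"
      using integral_nonneg_eq_0_iff_AE[OF i] f_nonneg
      by (auto simp: indicator_def intro!: AE_I2)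
    then have "AE s in mu. s \<notin> ?A"
    proof (rule AE_mp[OF _ AE_I2], intro impI notI)
      fix s assume s: "s \<in> space mu" and "f s * indicator ?A s = 0" "s \<in> ?A"
      moreover have "0 \<le> t * g s" using g_nonneg s \<open>0 < t\<close> by simp
      ultimately show False by (simp add: indicator_def)
    qed
    then have "emeasure mu ?A = 0" by (rule emeasure_eq_0_AE[OF AE_mp]) auto
    then show False using supp by simp
  qed
  then have "0 < (\<integral>s. f s * indicator ?A s \<partial>mu)" using integral_f_indicator_nonneg[of ?A] by linarith
  then show ?thesis unfolding gamma_fn_def using \<open>0 < t\<close> by simp
qed

lemma gamma_antimono:
  assumes "0 < s" "s \<le> t"
  shows "gamma_fn mu f g t \<le> gamma_fn mu f g s"
proof -
  have "(\<integral>x. f x * indicator {x \<in> space mu. f x > t * g x} x \<partial>mu)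
      \<le> (\<integral>x. f x * indicator {x \<in> space mu. f x > s * g x} x \<partial>mu)"
  proof (intro integral_mono_AE integrable_f_indicator AE_I2)
    fix x assume x: "x \<in> space mu"
    have "s * g x \<le> t * g x" using assms g_nonneg x by (intro mult_right_mono) auto
    then show "f x * indicator {x \<in> space mu. f x > t * g x} x \<le> f x * indicator {x \<in> space mu. f x > s * g x} x"
      using f_nonneg x by (auto simp: indicator_def)
  qed measurable
  moreover have "1 / t \<le> 1 / s" using assms by (simp add: frac_le)
  ultimately show ?thesis unfolding gamma_fn_def using assms
    by (intro mult_mono integral_f_indicator_nonneg) auto
qed

lemma decreasing_tail_gamma:
  assumes "\<forall>t>0. emeasure mu {s \<in> space mu. f s > t * g s} > 0"
  shows "decreasing_tail (gamma_fn mu f g)"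
  using assms gamma_pos gamma_antimono gamma_le_inverse by unfold_locales auto

lemma kappa_scaled_gamma_closed_tendsto:
  fixes \<kappa> :: "real \<Rightarrow> real"
  assumes supp: "\<forall>t>0. emeasure mu {s \<in> space mu. f s > t * g s} > 0"
    and rv: "regvar_neg \<alpha> (gamma_fn mu f g)"
    and kappa: "\<kappa> \<sim>[at_top] left_inv (\<lambda>s. 1 / gamma_fn mu f g s)" and "0 < x"
  shows "((\<lambda>t. t * gamma_closed (\<kappa> t * x)) \<longlongrightarrow> x powr (- \<alpha>)) at_top"
proof (rule tendstoI)
  interpret decreasing_tail "gamma_fn mu f g" by (rule decreasing_tail_gamma[OF supp])
  fix e :: real assume "0 < e"
  have "((\<lambda>r. (x / r) powr (- \<alpha>) / r) \<longlongrightarrow> (x / 1) powr (- \<alpha>) / 1) (at_right 1)"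
    using \<open>0 < x\<close> by (intro tendsto_intros) auto
  then have "eventually (\<lambda>r. (x / r) powr (- \<alpha>) / r < x powr (- \<alpha>) + e / 2) (at_right 1)"
    using \<open>0 < e\<close> by (intro order_tendstoD(2)) auto
  then obtain d where d: "1 < d" "\<And>r. 1 < r \<Longrightarrow> r < d \<Longrightarrow> (x / r) powr (- \<alpha>) / r < x powr (- \<alpha>) + e / 2"
    unfolding eventually_at_right_field by auto
  define r where "r = (1 + d) / 2"
  have "1 < r" "r < d" using d by (auto simp: r_def)
  then have r: "1 < r" "(x / r) powr (- \<alpha>) / r < x powr (- \<alpha>) + e / 2" using d(2) by auto
  have "((\<lambda>t. t * gamma_fn mu f g (\<kappa> t * (x / r)) / r) \<longlongrightarrow> (x / r) powr (- \<alpha>) / r) at_top"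
    using r \<open>0 < x\<close> by (intro tendsto_divide kappa_scaled_gamma_tendsto[OF rv kappa] tendsto_const) auto
  then have "eventually (\<lambda>t. t * gamma_fn mu f g (\<kappa> t * (x / r)) / r < x powr (- \<alpha>) + e) at_top"
    using r(2) \<open>0 < e\<close> by (intro order_tendstoD(2)) auto
  moreover have "eventually (\<lambda>t. x powr (- \<alpha>) - e < t * gamma_fn mu f g (\<kappa> t * x)) at_top"
    using \<open>0 < e\<close> by (intro order_tendstoD(1)[OF kappa_scaled_gamma_tendsto[OF rv kappa \<open>0 < x\<close>]]) auto
  ultimately show "eventually (\<lambda>t. dist (t * gamma_closed (\<kappa> t * x)) (x powr (- \<alpha>)) < e) at_top"
    using eventually_kappa_pos[OF kappa] eventually_gt_at_top[of 0]
  proof eventually_elim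
    case (elim t)
    then have a: "0 < \<kappa> t * x" using \<open>0 < x\<close> by simp
    have "t * gamma_fn mu f g (\<kappa> t * x) \<le> t * gamma_closed (\<kappa> t * x)"
      using gamma_le_gamma_closed[OF a] elim by (intro mult_left_mono) auto
    moreover have "t * gamma_closed (\<kappa> t * x) \<le> t * (gamma_fn mu f g (\<kappa> t * (x / r)) / r)"
      using gamma_closed_le[OF a r(1)] elim by (intro mult_left_mono) auto
    ultimately show ?case using elim(1,2) unfolding dist_real_def abs_less_iff by auto
  qed
qed

end

section \<open>Bivariate Frechet pairs\<close>

locale frechet_pair = spectral_densities mu f g + prob_space M
  for mu :: "'a measure" and f g :: "'a \<Rightarrow> real" and M :: "'w measure" +
  fixes X Y :: "'w \<Rightarrow> real"
  assumes X_meas[measurable]: "X \<in> borel_measurable M" and Y_meas[measurable]: "Y \<in> borel_measurable M"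
    and cdf_eq: "\<And>x y. 0 < x \<Longrightarrow> 0 < y \<Longrightarrow>
      measure M {\<omega> \<in> space M. X \<omega> \<le> x \<and> Y \<omega> \<le> y} = exp (- exponent x y)"
begin

definition ratio_cdf :: "real \<Rightarrow> real \<Rightarrow> real" where
  "ratio_cdf a b = measure M {\<omega> \<in> space M. X \<omega> \<le> a * Y \<omega> \<and> 0 < Y \<omega> \<and> Y \<omega> \<le> b}"

lemma measure_cdf_strip:
  assumes "0 < x" "0 < b" "b \<le> b'"
  shows "measure M {\<omega> \<in> space M. X \<omega> \<le> x \<and> b < Y \<omega> \<and> Y \<omega> \<le> b'}
    = exp (- exponent x b') - exp (- exponent x b)"
proof -
  have "{\<omega> \<in> space M. X \<omega> \<le> x \<and> b < Y \<omega> \<and> Y \<omega> \<le> b'}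
      = {\<omega> \<in> space M. X \<omega> \<le> x \<and> Y \<omega> \<le> b'} - {\<omega> \<in> space M. X \<omega> \<le> x \<and> Y \<omega> \<le> b}"
    by auto
  moreover have "measure M ({\<omega> \<in> space M. X \<omega> \<le> x \<and> Y \<omega> \<le> b'} - {\<omega> \<in> space M. X \<omega> \<le> x \<and> Y \<omega> \<le> b})
      = measure M {\<omega> \<in> space M. X \<omega> \<le> x \<and> Y \<omega> \<le> b'} - measure M {\<omega> \<in> space M. X \<omega> \<le> x \<and> Y \<omega> \<le> b}"
    using assms by (intro finite_measure_Diff) (auto, measurable)
  ultimately show ?thesis using assms by (simp add: cdf_eq)
qed

lemma ratio_cdf_diff:
  assumes "0 < b" "b \<le> b'"
  shows "ratio_cdf a b' - ratio_cdf a b = measure M {\<omega> \<in> space M. X \<omega> \<le> a * Y \<omega> \<and> b < Y \<omega> \<and> Y \<omega> \<le> b'}"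
proof -
  let ?S = "\<lambda>c. {\<omega> \<in> space M. X \<omega> \<le> a * Y \<omega> \<and> 0 < Y \<omega> \<and> Y \<omega> \<le> c}"
  have "{\<omega> \<in> space M. X \<omega> \<le> a * Y \<omega> \<and> b < Y \<omega> \<and> Y \<omega> \<le> b'} = ?S b' - ?S b"
    using assms by auto
  moreover have "measure M (?S b' - ?S b) = measure M (?S b') - measure M (?S b)"
    using assms by (intro finite_measure_Diff) (auto, measurable)
  ultimately show ?thesis unfolding ratio_cdf_def by simp
qed

lemma ratio_cdf_increment_le:
  assumes "0 < a" "0 < b" "b \<le> b'"
  shows "ratio_cdf a b' - ratio_cdf a b \<le> exp (- exponent (a * b') b') - exp (- exponent (a * b') b)"
proof -
  have "measure M {\<omega> \<in> space M. X \<omega> \<le> a * Y \<omega> \<and> b < Y \<omega> \<and> Y \<omega> \<le> b'}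
      \<le> measure M {\<omega> \<in> space M. X \<omega> \<le> a * b' \<and> b < Y \<omega> \<and> Y \<omega> \<le> b'}"
    using assms(1) by (intro finite_measure_mono) (auto intro: order_trans mult_left_mono)
  then show ?thesis using ratio_cdf_diff measure_cdf_strip[of "a * b'" b b'] assms by simp
qed

lemma ratio_cdf_increment_ge:
  assumes "0 < a" "0 < b" "b \<le> b'"
  shows "exp (- exponent (a * b) b') - exp (- exponent (a * b) b) \<le> ratio_cdf a b' - ratio_cdf a b"
proof -
  have "measure M {\<omega> \<in> space M. X \<omega> \<le> a * b \<and> b < Y \<omega> \<and> Y \<omega> \<le> b'}
      \<le> measure M {\<omega> \<in> space M. X \<omega> \<le> a * Y \<omega> \<and> b < Y \<omega> \<and> Y \<omega> \<le> b'}"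
    using assms(1) by (intro finite_measure_mono) (auto intro: order_trans mult_left_mono less_imp_le)
  then show ?thesis using ratio_cdf_diff measure_cdf_strip[of "a * b" b b'] assms by simp
qed

lemma ratio_cdf_lipschitz:
  assumes "0 < a" "0 < b" "b \<le> b'"
  shows "ratio_cdf a b' - ratio_cdf a b \<le> 1 / b - 1 / b'"
proof -
  have "exp (- exponent (a * b') b') - exp (- exponent (a * b') b) \<le> 1 / b - 1 / b'"
  proof (cases "exponent (a * b') b' \<le> exponent (a * b') b")
    case True
    have "0 < 1 / b'" "1 / b' \<le> exponent (a * b') b'" using exponent_ge assms by auto
    then have "0 \<le> exponent (a * b') b'" by linarith
    then have "exp (- exponent (a * b') b') - exp (- exponent (a * b') b) \<le> exponent (a * b') b - exponent (a * b') b'"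
      using True by (rule exp_minus_diff_le)
    also have "\<dots> \<le> 1 / b - 1 / b'" using exponent_diff_le assms(2,3) by simp
    finally show ?thesis .
  next
    case False
    then have "exp (- exponent (a * b') b') - exp (- exponent (a * b') b) \<le> 0" by simp
    also have "0 \<le> 1 / b - 1 / b'" using assms by (simp add: frac_le)
    finally show ?thesis .
  qed
  then show ?thesis using ratio_cdf_increment_le[OF assms] by simp
qed

lemma ratio_cdf_mono:
  assumes "0 < b" "b \<le> b'"
  shows "ratio_cdf a b \<le> ratio_cdf a b'"
  using ratio_cdf_diff[OF assms, of a] measure_nonneg[of M "{\<omega> \<in> space M. X \<omega> \<le> a * Y \<omega> \<and> b < Y \<omega> \<and> Y \<omega> \<le> b'}"]
  by linarith

lemma continuous_on_ratio_cdf: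
  assumes "0 < a" "0 < p"
  shows "continuous_on {p..q} (ratio_cdf a)"
proof (rule lipschitz_on_continuous_on[where L = "1 / p\<^sup>2"], rule lipschitz_onI)
  have key: "\<bar>ratio_cdf a y - ratio_cdf a x\<bar> \<le> 1 / p\<^sup>2 * \<bar>y - x\<bar>" if "x \<in> {p..q}" "y \<in> {p..q}" "x \<le> y" for x y
  proof -
    have x: "p \<le> x" "0 < x" using that assms by auto
    have "\<bar>ratio_cdf a y - ratio_cdf a x\<bar> = ratio_cdf a y - ratio_cdf a x"
      using ratio_cdf_mono[of x y a] x that by simp
    also have "\<dots> \<le> 1 / x - 1 / y" using ratio_cdf_lipschitz[OF assms(1) x(2) that(3)] .
    also have "\<dots> = (y - x) / (x * y)" using x that by (simp add: field_simps)
    also have "\<dots> \<le> (y - x) / (p * p)" using x assms that by (intro divide_left_mono mult_mono) auto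
    finally show ?thesis using that by (simp add: power2_eq_square)
  qed
  then show "dist (ratio_cdf a x) (ratio_cdf a y) \<le> 1 / p\<^sup>2 * dist x y" if "x \<in> {p..q}" "y \<in> {p..q}" for x y
    unfolding dist_real_def using that key[of x y] key[of y x]
    by (cases "x \<le> y") (simp_all add: abs_minus_commute)
qed simp

lemma ratio_cdf_le_exp:
  assumes "0 < a" "0 < b"
  shows "ratio_cdf a b \<le> exp (- exponent a 1 / b)"
proof -
  have "ratio_cdf a b \<le> measure M {\<omega> \<in> space M. X \<omega> \<le> a * b \<and> Y \<omega> \<le> b}"
    unfolding ratio_cdf_def using assms(1) by (intro finite_measure_mono) (auto intro: order_trans mult_left_mono)
  also have "\<dots> = exp (- exponent a 1 / b)" using cdf_eq exponent_homogeneous assms by simp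
  finally show ?thesis .
qed
lemma ratio_cdf_increment_le_layer:
  assumes "0 < a" "0 < t" "0 < h"
  shows "ratio_cdf a (t + h) - ratio_cdf a t \<le> exp (- exponent a 1 / (t + h))
    - exp (- (g_mass_le a / t + gamma_fn mu f g a / (t + h))) + (1 / t - 1 / (t + h)) * (1 / a) * f_layer a t h"
proof -
  let ?R = "(1 / t - 1 / (t + h)) * (1 / a) * f_layer a t h"
  have "0 \<le> ?R" using assms integral_f_indicator_nonneg by (simp add: f_layer_def frac_le)
  then have "exp (- (g_mass_le a / t + gamma_fn mu f g a / (t + h))) - ?R
      \<le> exp (- (g_mass_le a / t + gamma_fn mu f g a / (t + h) + ?R))"
    using g_mass_le_bounds gamma_nonneg assms by (intro exp_minus_add_ge) auto
  also have "\<dots> \<le> exp (- exponent (a * (t + h)) t)"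
    using exponent_le_f_layer[OF assms(1,2), of h] assms(3) by simp
  finally show ?thesis
    using ratio_cdf_increment_le[OF assms(1,2), of "t + h"] exponent_homogeneous[of "t + h" a] assms by simp
qed

lemma ratio_cdf_increment_ge_layer:
  assumes "0 < a" "0 < t" "0 < h"
  shows "exp (- (gamma_closed a / t + g_mass_lt a / (t + h))) - (1 / t - 1 / (t + h)) * g_layer a t h
    - exp (- exponent a 1 / t) \<le> ratio_cdf a (t + h) - ratio_cdf a t"
proof -
  let ?R = "(1 / t - 1 / (t + h)) * g_layer a t h"
  have "0 \<le> ?R" using assms integral_g_indicator_nonneg by (simp add: g_layer_def frac_le)
  then have "exp (- (gamma_closed a / t + g_mass_lt a / (t + h))) - ?R
      \<le> exp (- (gamma_closed a / t + g_mass_lt a / (t + h) + ?R))"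
    using g_mass_lt_bounds gamma_closed_nonneg assms by (intro exp_minus_add_ge) auto
  also have "\<dots> \<le> exp (- exponent (a * t) (t + h))"
    using exponent_le_g_layer[OF assms(1,2), of h] assms(3) by simp
  finally show ?thesis
    using ratio_cdf_increment_ge[OF assms(1,2), of "t + h"] exponent_homogeneous[of t a] assms by simp
qed

text \<open>\<open>ratio_cdf a\<close> is not known to be differentiable, so the bounds below follow from the
  one-sided increment estimates above through a Dini-derivative argument.\<close>

lemma ratio_cdf_le:
  assumes "0 < a" "0 < b"
  shows "ratio_cdf a b \<le> g_mass_le a / exponent a 1 * exp (- exponent a 1 / b)"
proof -
  define c A \<Gamma> where "c = exponent a 1" and "A = g_mass_le a" and "\<Gamma> = gamma_fn mu f g a"
  have c: "c = A + \<Gamma>" "1 \<le> c"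
    using exponent_eq_g_mass_le_add_gamma[OF assms(1)] exponent_ge[of 1 a] by (auto simp: c_def A_def \<Gamma>_def)
  have "A / c + \<Gamma> / c = 1" using c by (simp add: add_divide_distrib[symmetric])
  then have split: "A / c * d + \<Gamma> / c * d = d" for d by (metis distrib_right mult_1)
  define \<Phi> where "\<Phi> t = ratio_cdf a t - A / c * exp (- c / t)" for t
  have "\<Phi> b \<le> 0"
  proof (rule nonpos_if_right_increments_small[where \<Phi> = \<Phi> and Q = "\<lambda>t h. (1 / t - 1 / (t + h)) * (1 / a) * f_layer a t h
      - (exp (- (A / t + \<Gamma> / (t + h))) - exp (- c / t) - \<Gamma> / c * (exp (- c / (t + h)) - exp (- c / t)))"])
    show "continuous_on {p..q} \<Phi>" if "0 < p" for p q
      unfolding \<Phi>_def using that assms by (intro continuous_intros continuous_on_ratio_cdf) auto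
    show "((\<lambda>h. ((1 / t - 1 / (t + h)) * (1 / a) * f_layer a t h
      - (exp (- (A / t + \<Gamma> / (t + h))) - exp (- c / t) - \<Gamma> / c * (exp (- c / (t + h)) - exp (- c / t)))) / h)
      \<longlongrightarrow> 0) (at_right 0)" if "0 < t" for t
      using tendsto_diff[OF increment_times_null_quotient_tendsto[where K = "1 / a", OF that f_layer_tendsto_zero[OF that]]
        exp_two_scale_increment[of t A \<Gamma>, folded c(1)]] that c
      by (simp only: diff_divide_distrib diff_zero)
    show "eventually (\<lambda>t. \<Phi> t \<le> e) (at_right 0)" if "0 < e" for e
      unfolding eventually_at_right_field
    proof (intro exI[of _ e] conjI allI impI)
      fix t assume "0 < t" "t < e"
      have "\<Phi> t \<le> ratio_cdf a t"
        using g_mass_le_bounds c by (simp add: \<Phi>_def A_def)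
      also have "\<dots> \<le> exp (- c / t)" using ratio_cdf_le_exp assms \<open>0 < t\<close> by (simp add: c_def)
      also have "\<dots> \<le> t" using exp_minus_div_le[OF c(2) \<open>0 < t\<close>] .
      finally show "\<Phi> t \<le> e" using \<open>t < e\<close> by simp
    qed (use that in simp)
    fix t h :: real assume "0 < t" "0 < h"
    show "\<Phi> (t + h) - \<Phi> t \<le> (1 / t - 1 / (t + h)) * (1 / a) * f_layer a t h
      - (exp (- (A / t + \<Gamma> / (t + h))) - exp (- c / t) - \<Gamma> / c * (exp (- c / (t + h)) - exp (- c / t)))"
      using ratio_cdf_increment_le_layer[OF assms(1) \<open>0 < t\<close> \<open>0 < h\<close>]
        split[of "exp (- c / (t + h)) - exp (- c / t)"]
      unfolding \<Phi>_def right_diff_distrib by (simp add: c_def A_def \<Gamma>_def)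
  qed (rule assms(2))
  then show ?thesis by (simp add: \<Phi>_def c_def A_def)
qed

lemma ratio_cdf_ge:
  assumes "0 < a" "0 < b"
  shows "g_mass_lt a / exponent a 1 * exp (- exponent a 1 / b) \<le> ratio_cdf a b"
proof -
  define c A P where "c = exponent a 1" and "A = g_mass_lt a" and "P = gamma_closed a"
  have c: "c = P + A" "1 \<le> c"
    using exponent_eq_g_mass_lt_add_gamma_closed[OF assms(1)] exponent_ge[of 1 a] by (auto simp: c_def A_def P_def)
  have A: "0 \<le> A / c" "A / c \<le> 1"
    using g_mass_lt_bounds gamma_closed_nonneg[OF assms(1)] c by (auto simp: A_def P_def)
  define \<Phi> where "\<Phi> t = A / c * exp (- c / t) - ratio_cdf a t" for t
  have "\<Phi> b \<le> 0"
  proof (rule nonpos_if_right_increments_small[where \<Phi> = \<Phi> and Q = "\<lambda>t h. (1 / t - 1 / (t + h)) * 1 * g_layer a t h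
      - (exp (- (P / t + A / (t + h))) - exp (- c / t) - A / c * (exp (- c / (t + h)) - exp (- c / t)))"])
    show "continuous_on {p..q} \<Phi>" if "0 < p" for p q
      unfolding \<Phi>_def using that assms by (intro continuous_intros continuous_on_ratio_cdf) auto
    show "((\<lambda>h. ((1 / t - 1 / (t + h)) * 1 * g_layer a t h
      - (exp (- (P / t + A / (t + h))) - exp (- c / t) - A / c * (exp (- c / (t + h)) - exp (- c / t)))) / h)
      \<longlongrightarrow> 0) (at_right 0)" if "0 < t" for t
      using tendsto_diff[OF increment_times_null_quotient_tendsto[where K = 1, OF that g_layer_tendsto_zero[OF that]]
        exp_two_scale_increment[of t P A, folded c(1)]] that c
      by (simp only: diff_divide_distrib diff_zero)
    show "eventually (\<lambda>t. \<Phi> t \<le> e) (at_right 0)" if "0 < e" for e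
      unfolding eventually_at_right_field
    proof (intro exI[of _ e] conjI allI impI)
      fix t assume "0 < t" "t < e"
      have "A / c * exp (- c / t) \<le> exp (- c / t)" using A by (intro mult_left_le_one_le) auto
      moreover have "0 \<le> ratio_cdf a t" by (simp add: ratio_cdf_def)
      ultimately have "\<Phi> t \<le> exp (- c / t)" unfolding \<Phi>_def by linarith
      also have "\<dots> \<le> t" using exp_minus_div_le[OF c(2) \<open>0 < t\<close>] .
      finally show "\<Phi> t \<le> e" using \<open>t < e\<close> by simp
    qed (use that in simp)
    fix t h :: real assume "0 < t" "0 < h"
    show "\<Phi> (t + h) - \<Phi> t \<le> (1 / t - 1 / (t + h)) * 1 * g_layer a t h
      - (exp (- (P / t + A / (t + h))) - exp (- c / t) - A / c * (exp (- c / (t + h)) - exp (- c / t)))"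
      using ratio_cdf_increment_ge_layer[OF assms(1) \<open>0 < t\<close> \<open>0 < h\<close>]
      unfolding \<Phi>_def right_diff_distrib by (simp add: c_def A_def P_def)
  qed (rule assms(2))
  then show ?thesis by (simp add: \<Phi>_def c_def A_def)
qed

lemma Y_nonpos_null: "{\<omega> \<in> space M. Y \<omega> \<le> 0} \<in> null_sets M"
proof -
  have "{\<omega> \<in> space M. X \<omega> \<le> real (Suc m) \<and> Y \<omega> \<le> 0} \<in> null_sets M" for m
  proof -
    let ?A = "{\<omega> \<in> space M. X \<omega> \<le> real (Suc m) \<and> Y \<omega> \<le> 0}"
    have "measure M ?A \<le> 0"
    proof (rule field_le_epsilon)
      fix e :: real assume "0 < e"
      have "measure M ?A \<le> measure M {\<omega> \<in> space M. X \<omega> \<le> real (Suc m) \<and> Y \<omega> \<le> e}"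
        using \<open>0 < e\<close> by (intro finite_measure_mono) auto
      also have "\<dots> = exp (- exponent (real (Suc m)) e)" using cdf_eq \<open>0 < e\<close> by simp
      also have "\<dots> \<le> exp (- 1 / e)" using exponent_ge[OF \<open>0 < e\<close>] by simp
      also have "\<dots> \<le> e" using exp_minus_div_le \<open>0 < e\<close> by simp
      finally show "measure M ?A \<le> 0 + e" by simp
    qed
    then have "measure M ?A = 0" using measure_nonneg[of M ?A] by linarith
    then show ?thesis by (intro null_setsI) (auto simp: emeasure_eq_measure)
  qed
  moreover have "{\<omega> \<in> space M. Y \<omega> \<le> 0} = (\<Union>m. {\<omega> \<in> space M. X \<omega> \<le> real (Suc m) \<and> Y \<omega> \<le> 0})"
    using reals_Archimedean2 by (fastforce intro: less_imp_le order_trans[OF _ of_nat_le_iff[THEN iffD2, OF le_SucI]])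
  ultimately show ?thesis by auto
qed

lemma measure_ratio_le_eq_ratio_cdf:
  assumes "0 < a"
  shows "measure M {\<omega> \<in> space M. X \<omega> / Y \<omega> \<le> a \<and> Y \<omega> \<le> b} = ratio_cdf a b"
proof -
  let ?N = "{\<omega> \<in> space M. X \<omega> / Y \<omega> \<le> a \<and> Y \<omega> \<le> b \<and> Y \<omega> \<le> 0}"
  have "{\<omega> \<in> space M. X \<omega> / Y \<omega> \<le> a \<and> Y \<omega> \<le> b}
      = {\<omega> \<in> space M. X \<omega> \<le> a * Y \<omega> \<and> 0 < Y \<omega> \<and> Y \<omega> \<le> b} \<union> ?N"
    by (auto simp: divide_le_eq mult.commute)
  moreover have "?N \<in> null_sets M" by (rule null_sets_subset[OF Y_nonpos_null]) auto
  ultimately show ?thesis unfolding ratio_cdf_def by (simp add: measure_Un_null_set)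
qed

end

section \<open>Normalized maxima\<close>

lemma (in spectral_densities) tendsto_normalized_max_bounds:
  fixes \<kappa> :: "real \<Rightarrow> real"
  assumes supp: "\<forall>t>0. emeasure mu {s \<in> space mu. f s > t * g s} > 0"
    and rv: "regvar_neg \<alpha> (gamma_fn mu f g)"
    and kappa: "\<kappa> \<sim>[at_top] left_inv (\<lambda>s. 1 / gamma_fn mu f g s)" and "0 < x" "0 < y"
  defines "a n \<equiv> \<kappa> (real n) * x"
  shows "((\<lambda>n. (g_mass_le (a n) / exponent (a n) 1 * exp (- exponent (a n) 1 / (real n * y))) ^ n)
      \<longlongrightarrow> exp (- (x powr (- \<alpha>) + 1 / y))) sequentially" (is ?upper)
    and "((\<lambda>n. (g_mass_lt (a n) / exponent (a n) 1 * exp (- exponent (a n) 1 / (real n * y))) ^ n)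
      \<longlongrightarrow> exp (- (x powr (- \<alpha>) + 1 / y))) sequentially" (is ?lower)
proof -
  interpret decreasing_tail "gamma_fn mu f g" by (rule decreasing_tail_gamma[OF supp])
  have a_pos: "eventually (\<lambda>n. 0 < a n) sequentially"
    using eventually_compose_filterlim[OF eventually_kappa_pos[OF kappa] filterlim_real_sequentially]
    by eventually_elim (simp add: a_def \<open>0 < x\<close>)
  have c: "1 \<le> exponent (a n) 1" for n using exponent_ge[of 1] by simp
  have "((\<lambda>n. real n * gamma_fn mu f g (a n)) \<longlongrightarrow> x powr (- \<alpha>)) sequentially"
    unfolding a_def by (rule filterlim_compose[OF kappa_scaled_gamma_tendsto[OF rv kappa \<open>0 < x\<close>] filterlim_real_sequentially])
  then have "((\<lambda>n. real n * (exponent (a n) 1 - g_mass_le (a n))) \<longlongrightarrow> x powr (- \<alpha>)) sequentially"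
    by (rule Lim_transform_eventually) (use a_pos in \<open>eventually_elim, simp add: exponent_eq_g_mass_le_add_gamma\<close>)
  then show ?upper by (rule tendsto_power_mass_exp[OF _ c g_mass_le_bounds \<open>0 < y\<close>])
  have "((\<lambda>n. real n * gamma_closed (a n)) \<longlongrightarrow> x powr (- \<alpha>)) sequentially"
    unfolding a_def
    by (rule filterlim_compose[OF kappa_scaled_gamma_closed_tendsto[OF supp rv kappa \<open>0 < x\<close>] filterlim_real_sequentially])
  then have "((\<lambda>n. real n * (exponent (a n) 1 - g_mass_lt (a n))) \<longlongrightarrow> x powr (- \<alpha>)) sequentially"
    by (rule Lim_transform_eventually) (use a_pos in \<open>eventually_elim, simp add: exponent_eq_g_mass_lt_add_gamma_closed\<close>)
  then show ?lower by (rule tendsto_power_mass_exp[OF _ c g_mass_lt_bounds \<open>0 < y\<close>])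
qed

lemma (in prob_space) prob_max_ratio_max_le_eq_prod:
  fixes X Y :: "nat \<Rightarrow> 'a \<Rightarrow> real"
  assumes indep: "indep_vars (\<lambda>_. borel) (\<lambda>i \<omega>. (X i \<omega>, Y i \<omega>)) I" and "{1..n} \<subseteq> I" "1 \<le> n"
  shows "prob {\<omega> \<in> space M. (MAX i\<in>{1..n}. X i \<omega> / Y i \<omega>) \<le> a \<and> (MAX i\<in>{1..n}. Y i \<omega>) \<le> b}
    = (\<Prod>i\<in>{1..n}. prob {\<omega> \<in> space M. X i \<omega> / Y i \<omega> \<le> a \<and> Y i \<omega> \<le> b})"
proof -
  have [measurable]: "(fst :: real \<times> real \<Rightarrow> real) \<in> borel_measurable borel"
    "(snd :: real \<times> real \<Rightarrow> real) \<in> borel_measurable borel"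
    by (intro borel_measurable_continuous_onI continuous_intros)+
  define A where "A i = {\<omega> \<in> space M. X i \<omega> / Y i \<omega> \<le> a \<and> Y i \<omega> \<le> b}" for i
  have "{\<omega> \<in> space M. (MAX i\<in>{1..n}. X i \<omega> / Y i \<omega>) \<le> a \<and> (MAX i\<in>{1..n}. Y i \<omega>) \<le> b} = (\<Inter>i\<in>{1..n}. A i)"
    using \<open>1 \<le> n\<close> by (auto simp: A_def)
  also have "prob (\<Inter>i\<in>{1..n}. A i) = (\<Prod>i\<in>{1..n}. prob (A i))"
  proof (rule indep_setsD[where F = "\<lambda>i. {(\<lambda>\<omega>. (X i \<omega>, Y i \<omega>)) -` B \<inter> space M | B. B \<in> sets borel}"])
    show "indep_sets (\<lambda>i. {(\<lambda>\<omega>. (X i \<omega>, Y i \<omega>)) -` B \<inter> space M | B. B \<in> sets borel}) I"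
      using indep unfolding indep_vars_def2 by auto
    have "Measurable.pred borel (\<lambda>p :: real \<times> real. fst p / snd p \<le> a \<and> snd p \<le> b)" by measurable
    then have "{p :: real \<times> real. fst p / snd p \<le> a \<and> snd p \<le> b} \<in> sets borel" by (simp add: pred_def)
    moreover have "A i = (\<lambda>\<omega>. (X i \<omega>, Y i \<omega>)) -` {p. fst p / snd p \<le> a \<and> snd p \<le> b} \<inter> space M" for i
      by (auto simp: A_def)
    ultimately show "\<forall>i\<in>{1..n}. A i \<in> {(\<lambda>\<omega>. (X i \<omega>, Y i \<omega>)) -` B \<inter> space M | B. B \<in> sets borel}"
      by blast
  qed (use assms in auto)
  finally show ?thesis by (simp add: A_def)
qed

lemma (in spectral_densities) prob_normalized_max_bounds:
  fixes Xs Ys :: "nat \<Rightarrow> 'w \<Rightarrow> real"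
  assumes pairs: "\<And>i. 1 \<le> i \<Longrightarrow> frechet_pair mu f g M (Xs i) (Ys i)"
    and indep: "prob_space.indep_vars M (\<lambda>_. borel) (\<lambda>i \<omega>. (Xs i \<omega>, Ys i \<omega>)) {1..}"
    and "0 < s" "0 < x" "0 < r" "0 < y" "1 \<le> n"
  defines "P \<equiv> measure M {\<omega> \<in> space M. (MAX i\<in>{1..n}. Xs i \<omega> / Ys i \<omega>) / s \<le> x \<and> (MAX i\<in>{1..n}. Ys i \<omega>) / r \<le> y}"
  shows "(g_mass_lt (s * x) / exponent (s * x) 1 * exp (- exponent (s * x) 1 / (r * y))) ^ n \<le> P"
    and "P \<le> (g_mass_le (s * x) / exponent (s * x) 1 * exp (- exponent (s * x) 1 / (r * y))) ^ n"
proof -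
  interpret prob_space M using pairs[of 1] by (simp add: frechet_pair_def)
  have "0 < s * x" "0 < r * y" using assms by simp_all
  have "u / s \<le> x \<longleftrightarrow> u \<le> s * x" "v / r \<le> y \<longleftrightarrow> v \<le> r * y" for u v
    using assms by (simp_all add: pos_divide_le_eq mult.commute)
  then have "P = prob {\<omega> \<in> space M. (MAX i\<in>{1..n}. Xs i \<omega> / Ys i \<omega>) \<le> s * x \<and> (MAX i\<in>{1..n}. Ys i \<omega>) \<le> r * y}"
    unfolding P_def by (simp only:)
  also have "\<dots> = (\<Prod>i\<in>{1..n}. frechet_pair.ratio_cdf M (Xs i) (Ys i) (s * x) (r * y))"
    using prob_max_ratio_max_le_eq_prod[OF indep _ \<open>1 \<le> n\<close>]
      frechet_pair.measure_ratio_le_eq_ratio_cdf[OF pairs \<open>0 < s * x\<close>]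
    by (auto intro!: prod.cong)
  finally have P: "P = (\<Prod>i\<in>{1..n}. frechet_pair.ratio_cdf M (Xs i) (Ys i) (s * x) (r * y))" .
  let ?L = "g_mass_lt (s * x) / exponent (s * x) 1 * exp (- exponent (s * x) 1 / (r * y))"
    and ?U = "g_mass_le (s * x) / exponent (s * x) 1 * exp (- exponent (s * x) 1 / (r * y))"
  have "0 \<le> ?L" using g_mass_lt_bounds exponent_ge[of 1 "s * x"] by simp
  then have "(\<Prod>i\<in>{1..n}. ?L) \<le> P"
    unfolding P using frechet_pair.ratio_cdf_ge[OF pairs \<open>0 < s * x\<close> \<open>0 < r * y\<close>] by (intro prod_mono) auto
  then show "?L ^ n \<le> P" by simp
  have "P \<le> (\<Prod>i\<in>{1..n}. ?U)"
    unfolding P using frechet_pair.ratio_cdf_le[OF pairs \<open>0 < s * x\<close> \<open>0 < r * y\<close>]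
    by (intro prod_mono) (auto simp: frechet_pair.ratio_cdf_def[OF pairs])
  then show "P \<le> ?U ^ n" by simp
qed

theorem proposition2:
  fixes mu :: "'a::polish_space measure"
    and f g :: "'a \<Rightarrow> real"
    and M :: "'w measure"
    and Xs Ys :: "nat \<Rightarrow> 'w \<Rightarrow> real"
    and \<alpha> :: real
    and \<kappa> :: "real \<Rightarrow> real"
  assumes S_borel: "sets mu = sets borel"
    and sfin: "sigma_finite_measure mu"
    and f_meas: "f \<in> borel_measurable mu" and g_meas: "g \<in> borel_measurable mu"
    and f_nonneg: "\<forall>s\<in>space mu. f s \<ge> 0" and g_nonneg: "\<forall>s\<in>space mu. g s \<ge> 0"
    and f_int: "integrable mu f" and g_int: "integrable mu g"
    and f_one: "(\<integral>s. f s \<partial>mu) = 1" and g_one: "(\<integral>s. g s \<partial>mu) = 1"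
    and P: "prob_space M"
    and rvX: "\<forall>i\<ge>1. Xs i \<in> borel_measurable M"
    and rvY: "\<forall>i\<ge>1. Ys i \<in> borel_measurable M"
    and indep: "prob_space.indep_vars M (\<lambda>_. borel) (\<lambda>i \<omega>. (Xs i \<omega>, Ys i \<omega>)) {1..}"
    and cdf: "\<forall>i\<ge>1. \<forall>x>0. \<forall>y>0.
       measure M {\<omega> \<in> space M. Xs i \<omega> \<le> x \<and> Ys i \<omega> \<le> y}
         = exp (- (\<integral>s. max (f s / x) (g s / y) \<partial>mu))"
    and supp: "\<forall>t>0. emeasure mu {s \<in> space mu. f s > t * g s} > 0"
    and rv: "regvar_neg \<alpha> (gamma_fn mu f g)"
    and kappa: "\<kappa> \<sim>[at_top] (\<lambda>t. left_inv (\<lambda>s. 1 / gamma_fn mu f g s) t)"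
  shows "\<forall>x>0. \<forall>y>0.
    ((\<lambda>n::nat. measure M {\<omega> \<in> space M.
        (MAX i\<in>{1..n}. Xs i \<omega> / Ys i \<omega>) / \<kappa> (real n) \<le> x \<and>
        (MAX i\<in>{1..n}. Ys i \<omega>) / real n \<le> y})
      \<longlongrightarrow> exp (- (x powr (- \<alpha>))) * exp (- (y powr (-1)))) sequentially"
proof (intro allI impI)
  fix x y :: real assume "0 < x" "0 < y"
  interpret spectral_densities mu f g
    using f_meas g_meas f_nonneg g_nonneg f_int g_int f_one g_one by unfold_locales
  have pairs: "frechet_pair mu f g M (Xs i) (Ys i)" if "1 \<le> i" for i
    using P rvX rvY cdf that
    by (intro frechet_pair.intro frechet_pair_axioms.intro spectral_densities_axioms) (auto simp: exponent_def)
  let ?P = "\<lambda>n. measure M {\<omega> \<in> space M.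
    (MAX i\<in>{1..n}. Xs i \<omega> / Ys i \<omega>) / \<kappa> (real n) \<le> x \<and> (MAX i\<in>{1..n}. Ys i \<omega>) / real n \<le> y}"
  let ?bound = "\<lambda>m n. (m (\<kappa> (real n) * x) / exponent (\<kappa> (real n) * x) 1
    * exp (- exponent (\<kappa> (real n) * x) 1 / (real n * y))) ^ n"
  have "eventually (\<lambda>n. 0 < \<kappa> (real n) \<and> 1 \<le> n) sequentially"
    using eventually_compose_filterlim[OF decreasing_tail.eventually_kappa_pos[OF decreasing_tail_gamma[OF supp] kappa]
      filterlim_real_sequentially] eventually_ge_at_top by (rule eventually_conj)
  then have "eventually (\<lambda>n. ?bound g_mass_lt n \<le> ?P n) sequentially"
    "eventually (\<lambda>n. ?P n \<le> ?bound g_mass_le n) sequentially"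
    using prob_normalized_max_bounds[OF pairs indep _ \<open>0 < x\<close> _ \<open>0 < y\<close>] by (auto elim!: eventually_mono)
  from tendsto_sandwich[OF this tendsto_normalized_max_bounds(2,1)[OF supp rv kappa \<open>0 < x\<close> \<open>0 < y\<close>]]
  show "(?P \<longlongrightarrow> exp (- (x powr (- \<alpha>))) * exp (- (y powr (-1)))) sequentially"
    using \<open>0 < y\<close> by (simp add: exp_add[symmetric] powr_neg_one)
qed

end
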